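(* For every positive integer $d$ there is a graph $G$ with boxicity $2$ and cubicity larger than $d$.
   Context: For a simple undirected graph $G$, the boxicity of $G$ is the smallest dimension $d$ such that $G$ is (isomorphic to) the intersection graph of a family of axis-aligned boxes in $\mathbb{R}^d$ (one box per vertex, two distinct vertices adjacent iff their boxes intersect). The cubicity of $G$ is the smallest dimension $d$ such that $G$ is the intersection graph of a family of axis-aligned hypercubes in $\mathbb{R}^d$, where the hypercubes may have arbitrary (not necessarily equal) side lengths. *)

theory Defs
  imports Complex_Main
begin

(* A finite simple undirected graph: finite vertex set V (vertices are naturals,
   which is no loss since every finite graph is isomorphic to one on naturals),
   adjacency relation E that is symmetric and irreflexive. *)
definition simple_graph :: "nat set \<Rightarrow> (nat \<Rightarrow> nat \<Rightarrow> bool) \<Rightarrow> bool" where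
  "simple_graph V E \<longleftrightarrow> finite V \<and> (\<forall>u v. E u v \<longrightarrow> E v u) \<and> (\<forall>v. \<not> E v v)"

(* R^d modelled as functions nat => real vanishing at coordinates >= d. *)
definition euclid :: "nat \<Rightarrow> (nat \<Rightarrow> real) set" where
  "euclid d = {x. \<forall>i\<ge>d. x i = 0}"

definition closed_box :: "nat \<Rightarrow> (nat \<Rightarrow> real) \<Rightarrow> (nat \<Rightarrow> real) \<Rightarrow> (nat \<Rightarrow> real) set" where
  "closed_box d lo hi = {x \<in> euclid d. \<forall>i<d. lo i \<le> x i \<and> x i \<le> hi i}"

definition is_box :: "nat \<Rightarrow> (nat \<Rightarrow> real) set \<Rightarrow> bool" where
  "is_box d B \<longleftrightarrow> (\<exists>lo hi. (\<forall>i<d. lo i \<le> hi i) \<and> B = closed_box d lo hi)"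

definition is_cube :: "nat \<Rightarrow> (nat \<Rightarrow> real) set \<Rightarrow> bool" where
  "is_cube d B \<longleftrightarrow> (\<exists>lo s. s \<ge> 0 \<and> B = closed_box d lo (\<lambda>i. lo i + s))"

definition intersection_rep :: "nat set \<Rightarrow> (nat \<Rightarrow> nat \<Rightarrow> bool) \<Rightarrow> (nat \<Rightarrow> (nat \<Rightarrow> real) set) \<Rightarrow> bool" where
  "intersection_rep V E f \<longleftrightarrow>
     (\<forall>u\<in>V. \<forall>v\<in>V. u \<noteq> v \<longrightarrow> (E u v \<longleftrightarrow> f u \<inter> f v \<noteq> {}))"

definition boxicity :: "nat set \<Rightarrow> (nat \<Rightarrow> nat \<Rightarrow> bool) \<Rightarrow> nat" where
  "boxicity V E = (LEAST d. \<exists>f. (\<forall>v\<in>V. is_box d (f v)) \<and> intersection_rep V E f)"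

definition cubicity :: "nat set \<Rightarrow> (nat \<Rightarrow> nat \<Rightarrow> bool) \<Rightarrow> nat" where
  "cubicity V E = (LEAST d. \<exists>f. (\<forall>v\<in>V. is_cube d (f v)) \<and> intersection_rep V E f)"

end

theory Submission
  imports Defs
begin

text \<open>The witness is the complete bipartite graph K(m,m) with m > 2^d. It has boxicity 2: the
  rectangles [0,m] \<times> {v} and {w} \<times> [0,m] realise it, while it is not an interval graph since it
  contains an induced 4-cycle. For the cubicity bound, let c be a cube of smallest side; the m
  cubes on the other side of the bipartition all meet c and are pairwise disjoint. Record for
  each of them the set of coordinates in which its lower corner lies below that of c. Two cubes
  with the same record meet, because both are at least as large as c; so the records are
  distinct subsets of the D coordinates and m \<le> 2^D.\<close>

lemma closed_box_inter_nonempty_iff: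
  assumes "\<forall>i<D. lo1 i \<le> hi1 i" "\<forall>i<D. lo2 i \<le> hi2 i"
  shows "closed_box D lo1 hi1 \<inter> closed_box D lo2 hi2 \<noteq> {} \<longleftrightarrow>
         (\<forall>i<D. lo1 i \<le> hi2 i \<and> lo2 i \<le> hi1 i)"
proof
  assume "closed_box D lo1 hi1 \<inter> closed_box D lo2 hi2 \<noteq> {}"
  then show "\<forall>i<D. lo1 i \<le> hi2 i \<and> lo2 i \<le> hi1 i"
    unfolding closed_box_def by force
next
  assume overlap: "\<forall>i<D. lo1 i \<le> hi2 i \<and> lo2 i \<le> hi1 i"
  define x where "x = (\<lambda>i. if i < D then max (lo1 i) (lo2 i) else 0::real)"
  have "x \<in> closed_box D lo1 hi1 \<inter> closed_box D lo2 hi2"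
    using overlap assms unfolding closed_box_def euclid_def x_def by auto
  then show "closed_box D lo1 hi1 \<inter> closed_box D lo2 hi2 \<noteq> {}" by blast
qed

lemma obtain_box_corners:
  assumes "\<forall>v\<in>V. is_box D (f v)"
  obtains lo hi where "\<forall>v\<in>V. (\<forall>i<D. lo v i \<le> hi v i) \<and> f v = closed_box D (lo v) (hi v)"
  using assms unfolding is_box_def by metis

lemma obtain_cube_corners:
  assumes "\<forall>v\<in>V. is_cube D (f v)"
  obtains lo s where "\<forall>v\<in>V. s v \<ge> 0 \<and> f v = closed_box D (lo v) (\<lambda>i. lo v i + s v)"
  using assms unfolding is_cube_def by metis

lemma intersection_rep_adjacent_iff_overlap:
  assumes "intersection_rep V E f"
    and "\<forall>v\<in>V. (\<forall>i<D. lo v i \<le> hi v i) \<and> f v = closed_box D (lo v) (hi v)"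
    and "u \<in> V" "v \<in> V" "u \<noteq> v"
  shows "E u v \<longleftrightarrow> (\<forall>i<D. lo u i \<le> hi v i \<and> lo v i \<le> hi u i)"
  using assms closed_box_inter_nonempty_iff[of D "lo u" "hi u" "lo v" "hi v"]
  unfolding intersection_rep_def by auto

lemma intervals_no_induced_4_cycle:
  fixes a1 b1 a2 b2 a3 b3 a4 b4 :: real
  assumes "a1 \<le> b1" "a2 \<le> b2" "a3 \<le> b3" "a4 \<le> b4"
    and "a1 \<le> b3 \<and> a3 \<le> b1" "a1 \<le> b4 \<and> a4 \<le> b1"
    and "a2 \<le> b3 \<and> a3 \<le> b2" "a2 \<le> b4 \<and> a4 \<le> b2"
  shows "(a1 \<le> b2 \<and> a2 \<le> b1) \<or> (a3 \<le> b4 \<and> a4 \<le> b3)"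
  using assms by linarith

lemma cubes_meeting_smaller_cube_on_same_side_meet:
  fixes a a' c s s' s0 :: real
  assumes "s0 \<le> s" "s0 \<le> s'"
    and "a \<le> c + s0" "c \<le> a + s" "a' \<le> c + s0" "c \<le> a' + s'"
    and "(a \<le> c) = (a' \<le> c)"
  shows "a \<le> a' + s' \<and> a' \<le> a + s"
  using assms by (cases "a \<le> c") linarith+

lemma cube_rep_independent_neighbours_card_le:
  assumes rep: "intersection_rep V E f"
    and cubes: "\<forall>v\<in>V. s v \<ge> 0 \<and> f v = closed_box D (lo v) (\<lambda>i. lo v i + s v)"
    and "v0 \<in> V" "N \<subseteq> V"
    and neighbours: "\<forall>w\<in>N. w \<noteq> v0 \<and> E w v0 \<and> s v0 \<le> s w"
    and independent: "\<forall>w\<in>N. \<forall>w'\<in>N. w \<noteq> w' \<longrightarrow> \<not> E w w'"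
  shows "card N \<le> 2 ^ D"
proof -
  have adj: "E u v \<longleftrightarrow> (\<forall>i<D. lo u i \<le> lo v i + s v \<and> lo v i \<le> lo u i + s u)"
    if "u \<in> V" "v \<in> V" "u \<noteq> v" for u v
    using intersection_rep_adjacent_iff_overlap[OF rep, of D lo "\<lambda>v i. lo v i + s v"] cubes that
    by auto
  define below where "below w = {i. i < D \<and> lo w i \<le> lo v0 i}" for w
  have "inj_on below N"
  proof (rule inj_onI, rule ccontr)
    fix w w' assume w: "w \<in> N" and w': "w' \<in> N" and eq: "below w = below w'" and "w \<noteq> w'"
    have "lo w i \<le> lo w' i + s w' \<and> lo w' i \<le> lo w i + s w" if "i < D" for i
    proof -
      have "lo w i \<le> lo v0 i + s v0 \<and> lo v0 i \<le> lo w i + s w"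
           "lo w' i \<le> lo v0 i + s v0 \<and> lo v0 i \<le> lo w' i + s w'"
        using adj[of w v0] adj[of w' v0] neighbours w w' \<open>v0 \<in> V\<close> \<open>N \<subseteq> V\<close> \<open>i < D\<close> by auto
      moreover have "s v0 \<le> s w" "s v0 \<le> s w'" using neighbours w w' by auto
      moreover have "(lo w i \<le> lo v0 i) = (lo w' i \<le> lo v0 i)"
        using eq \<open>i < D\<close> unfolding below_def by blast
      ultimately show ?thesis using cubes_meeting_smaller_cube_on_same_side_meet by blast
    qed
    then have "E w w'" using adj[of w w'] w w' \<open>w \<noteq> w'\<close> \<open>N \<subseteq> V\<close> by auto
    then show False using independent w w' \<open>w \<noteq> w'\<close> by blast
  qed
  moreover have "below ` N \<subseteq> Pow {..<D}" unfolding below_def by auto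
  ultimately have "card N \<le> card (Pow {..<D})"
    by (metis card_image card_mono finite_Pow_iff finite_lessThan)
  then show ?thesis by (simp add: card_Pow)
qed

definition complete_bipartite :: "nat \<Rightarrow> nat \<Rightarrow> nat \<Rightarrow> bool" where
  "complete_bipartite m u v \<longleftrightarrow> (u < m) \<noteq> (v < m)"

lemma simple_graph_complete_bipartite: "simple_graph {..<2*m} (complete_bipartite m)"
  unfolding simple_graph_def complete_bipartite_def by auto

lemma complete_bipartite_box_rep_2:
  "\<exists>f. (\<forall>v\<in>{..<2*m}. is_box 2 (f v)) \<and> intersection_rep {..<2*m} (complete_bipartite m) f"
proof -
  define lo :: "nat \<Rightarrow> nat \<Rightarrow> real" where
    "lo v k = (if v < m then (if k = 0 then 0 else real v) else (if k = 0 then real (v - m) else 0))"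
    for v k
  define hi :: "nat \<Rightarrow> nat \<Rightarrow> real" where
    "hi v k = (if v < m then (if k = 0 then real m else real v) else (if k = 0 then real (v - m) else real m))"
    for v k
  define f where "f v = closed_box 2 (lo v) (hi v)" for v
  have corners: "\<forall>v\<in>{..<2*m}. (\<forall>i<2. lo v i \<le> hi v i) \<and> f v = closed_box 2 (lo v) (hi v)"
    unfolding lo_def hi_def f_def by auto
  have "intersection_rep {..<2*m} (complete_bipartite m) f"
    unfolding intersection_rep_def
  proof (intro ballI impI)
    fix u v assume u: "u \<in> {..<2*m}" and v: "v \<in> {..<2*m}" and "u \<noteq> v"
    have "f u \<inter> f v \<noteq> {} \<longleftrightarrow> (\<forall>i<2. lo u i \<le> hi v i \<and> lo v i \<le> hi u i)"
      using corners u v by (simp add: closed_box_inter_nonempty_iff)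
    also have "\<dots> \<longleftrightarrow> lo u 0 \<le> hi v 0 \<and> lo v 0 \<le> hi u 0 \<and> lo u 1 \<le> hi v 1 \<and> lo v 1 \<le> hi u 1"
      by (auto simp: less_2_cases_iff)
    also have "\<dots> \<longleftrightarrow> complete_bipartite m u v"
      using u v \<open>u \<noteq> v\<close> unfolding lo_def hi_def complete_bipartite_def by auto
    finally show "complete_bipartite m u v \<longleftrightarrow> f u \<inter> f v \<noteq> {}" by simp
  qed
  moreover have "\<forall>v\<in>{..<2*m}. is_box 2 (f v)"
    unfolding is_box_def using corners by auto
  ultimately show ?thesis by blast
qed

lemma complete_bipartite_no_box_rep_below_2:
  assumes "m \<ge> 2" "D < 2"
    and "\<forall>v\<in>{..<2*m}. is_box D (f v)" "intersection_rep {..<2*m} (complete_bipartite m) f"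
  shows False
proof -
  obtain lo hi where corners:
    "\<forall>v\<in>{..<2*m}. (\<forall>i<D. lo v i \<le> hi v i) \<and> f v = closed_box D (lo v) (hi v)"
    by (rule obtain_box_corners[OF assms(3)])
  have adj: "complete_bipartite m u v \<longleftrightarrow> (\<forall>i<D. lo u i \<le> hi v i \<and> lo v i \<le> hi u i)"
    if "u < 2*m" "v < 2*m" "u \<noteq> v" for u v
    using intersection_rep_adjacent_iff_overlap[OF assms(4) corners] that by auto
  text \<open>The vertices 0, 1, m, m+1 induce a 4-cycle.\<close>
  have vertices: "0 < 2*m" "1 < 2*m" "m < 2*m" "m+1 < 2*m" "1 < m"
    using assms(1) by auto
  show False
  proof (cases "D = 0")
    case True
    then show ?thesis using adj[of 0 1] vertices unfolding complete_bipartite_def by simp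
  next
    case False
    then have "D = 1" using assms(2) by simp
    have interval: "lo v 0 \<le> hi v 0" if "v < 2*m" for v
      using corners that \<open>D = 1\<close> by auto
    have edge: "lo u 0 \<le> hi v 0 \<and> lo v 0 \<le> hi u 0" if "u < 2" "m \<le> v" "v < 2*m" for u v
      using adj[of u v] that vertices \<open>D = 1\<close> unfolding complete_bipartite_def by auto
    have "(lo 0 0 \<le> hi 1 0 \<and> lo 1 0 \<le> hi 0 0) \<or> (lo m 0 \<le> hi (m+1) 0 \<and> lo (m+1) 0 \<le> hi m 0)"
      using vertices by (intro intervals_no_induced_4_cycle interval edge) auto
    moreover have "\<not> (lo 0 0 \<le> hi 1 0 \<and> lo 1 0 \<le> hi 0 0)" "\<not> (lo m 0 \<le> hi (m+1) 0 \<and> lo (m+1) 0 \<le> hi m 0)"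
      using adj[of 0 1] adj[of m "m+1"] vertices \<open>D = 1\<close> unfolding complete_bipartite_def by auto
    ultimately show False by blast
  qed
qed

lemma boxicity_complete_bipartite:
  assumes "m \<ge> 2"
  shows "boxicity {..<2*m} (complete_bipartite m) = 2"
  unfolding boxicity_def
proof (rule Least_equality)
  show "\<exists>f. (\<forall>v\<in>{..<2*m}. is_box 2 (f v)) \<and> intersection_rep {..<2*m} (complete_bipartite m) f"
    by (rule complete_bipartite_box_rep_2)
qed (use complete_bipartite_no_box_rep_below_2[OF assms] in \<open>metis not_le\<close>)

text \<open>Unit cubes whose lower corner is 0 in the vertex's own coordinate, 3/2 in the coordinates
  of its own side and 3/4 in those of the other side: two cubes on the same side are 3/2 apart in
  each other's coordinate, while all other gaps are at most 3/4.\<close>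

lemma complete_bipartite_cube_rep:
  "\<exists>f. (\<forall>v\<in>{..<2*m}. is_cube (2*m) (f v)) \<and> intersection_rep {..<2*m} (complete_bipartite m) f"
proof -
  define lo :: "nat \<Rightarrow> nat \<Rightarrow> real" where
    "lo v k = (if v = k then 0 else if (v < m) = (k < m) then 3/2 else 3/4)" for v k
  define f where "f v = closed_box (2*m) (lo v) (\<lambda>i. lo v i + 1)" for v
  have "\<forall>v\<in>{..<2*m}. is_cube (2*m) (f v)"
    unfolding is_cube_def f_def by (intro ballI exI[of _ "lo _"] exI[of _ "1::real"]) simp
  moreover have "intersection_rep {..<2*m} (complete_bipartite m) f"
    unfolding intersection_rep_def
  proof (intro ballI impI)
    fix u v assume u: "u \<in> {..<2*m}" and v: "v \<in> {..<2*m}" and "u \<noteq> v"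
    have "f u \<inter> f v \<noteq> {} \<longleftrightarrow> (\<forall>i<2*m. lo u i \<le> lo v i + 1 \<and> lo v i \<le> lo u i + 1)"
      unfolding f_def by (rule closed_box_inter_nonempty_iff) auto
    also have "\<dots> \<longleftrightarrow> complete_bipartite m u v"
    proof
      assume "\<forall>i<2*m. lo u i \<le> lo v i + 1 \<and> lo v i \<le> lo u i + 1"
      then have "lo v u \<le> lo u u + 1" using u by blast
      then have "lo v u \<le> 1" unfolding lo_def by simp
      then show "complete_bipartite m u v"
        using \<open>u \<noteq> v\<close> unfolding lo_def complete_bipartite_def by (auto split: if_splits)
    qed (auto simp: lo_def complete_bipartite_def)
    finally show "complete_bipartite m u v \<longleftrightarrow> f u \<inter> f v \<noteq> {}" by simp
  qed
  ultimately show ?thesis by blast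
qed

lemma complete_bipartite_cube_rep_le_pow:
  assumes "\<forall>v\<in>{..<2*m}. is_cube D (f v)"
    and rep: "intersection_rep {..<2*m} (complete_bipartite m) f"
  shows "m \<le> 2 ^ D"
proof (cases "m = 0")
  case False
  obtain lo s where cubes: "\<forall>v\<in>{..<2*m}. s v \<ge> 0 \<and> f v = closed_box D (lo v) (\<lambda>i. lo v i + s v)"
    by (rule obtain_cube_corners[OF assms(1)])
  define v0 where "v0 = arg_min_on s {..<2*m}"
  have nonempty: "{..<2*m} \<noteq> {}" using False by (simp add: lessThan_empty_iff)
  have v0: "v0 \<in> {..<2*m}" "\<forall>w\<in>{..<2*m}. s v0 \<le> s w"
    unfolding v0_def using arg_min_if_finite(1)[OF finite_lessThan nonempty]
      arg_min_least[OF finite_lessThan nonempty, where f = s] by auto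
  define N where "N = (if v0 < m then {m..<2*m} else {..<m})"
  have "card N \<le> 2 ^ D"
  proof (rule cube_rep_independent_neighbours_card_le[OF rep cubes v0(1)])
    show "N \<subseteq> {..<2*m}" unfolding N_def by auto
    show "\<forall>w\<in>N. w \<noteq> v0 \<and> complete_bipartite m w v0 \<and> s v0 \<le> s w"
      using v0 unfolding N_def complete_bipartite_def by (auto split: if_splits)
    show "\<forall>w\<in>N. \<forall>w'\<in>N. w \<noteq> w' \<longrightarrow> \<not> complete_bipartite m w w'"
      unfolding N_def complete_bipartite_def by (auto split: if_splits)
  qed
  moreover have "card N = m" unfolding N_def by auto
  ultimately show ?thesis by simp
qed simp

lemma cubicity_complete_bipartite_gt:
  assumes "2 ^ d < m"
  shows "d < cubicity {..<2*m} (complete_bipartite m)"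
proof -
  let ?rep = "\<lambda>D. \<exists>f. (\<forall>v\<in>{..<2*m}. is_cube D (f v)) \<and>
                       intersection_rep {..<2*m} (complete_bipartite m) f"
  have "d < D" if "?rep D" for D
  proof -
    have "m \<le> 2 ^ D" using that complete_bipartite_cube_rep_le_pow by blast
    then have "(2::nat) ^ d < 2 ^ D" using assms by linarith
    then show ?thesis by simp
  qed
  then show ?thesis
    unfolding cubicity_def using LeastI[of ?rep, OF complete_bipartite_cube_rep] by blast
qed

theorem theorem6:
  fixes d :: nat
  assumes "d \<ge> 1"
  shows "\<exists>V E. simple_graph V E \<and> boxicity V E = 2 \<and> cubicity V E > d"
proof -
  define m :: nat where "m = 2 ^ d + 1"
  have "m \<ge> 2" "2 ^ d < m" unfolding m_def by auto
  then show ?thesis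
    using simple_graph_complete_bipartite boxicity_complete_bipartite
      cubicity_complete_bipartite_gt by blast
qed

end
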